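(* For $\alpha_1,\alpha_2\in\mathbb C$ let $K_1(\alpha_1,\alpha_2)$ be the complex Leibniz algebra with basis $\{l,p_+,p_-,X_1,X_2,X_3\}$ whose only nonzero products are $[l,p_+]=p_+$, $[p_+,l]=-p_+$, $[l,p_-]=-p_-$, $[p_-,l]=p_-$, $[l,l]=\alpha_1X_1$, $[p_+,p_-]=\alpha_2X_1$, $[p_-,p_+]=-\alpha_2X_1$, $[X_1,p_+]=X_2$, $[X_1,p_-]=-X_3$, $[X_2,l]=-X_2$, $[X_3,l]=X_3$. Then every algebra $K_1(\alpha_1,\alpha_2)$ is isomorphic to one of $K_1(1,1)$, $K_1(1,0)$, $K_1(0,1)$, $K_1(0,0)$, and these four algebras are pairwise non-isomorphic.
   Context: A (right) Leibniz algebra is a vector space with a bilinear bracket satisfying $[[x,y],z]=[[x,z],y]+[x,[y,z]]$. *)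

theory Defs
  imports Complex_Main
begin

datatype basis = L | Pp | Pm | X1 | X2 | X3

lemma UNIV_basis: "(UNIV :: basis set) = {L, Pp, Pm, X1, X2, X3}"
  by (auto intro: basis.exhaust)

instance basis :: finite
  by standard (simp add: UNIV_basis)

type_synonym vec = "basis \<Rightarrow> complex"

definition ev :: "basis \<Rightarrow> vec" where
  "ev b = (\<lambda>i. if i = b then 1 else 0)"

fun K1_table :: "complex \<Rightarrow> complex \<Rightarrow> basis \<Rightarrow> basis \<Rightarrow> vec" where
  "K1_table a1 a2 L Pp = ev Pp"
| "K1_table a1 a2 Pp L = (\<lambda>i. - ev Pp i)"
| "K1_table a1 a2 L Pm = (\<lambda>i. - ev Pm i)"
| "K1_table a1 a2 Pm L = ev Pm"
| "K1_table a1 a2 L L = (\<lambda>i. a1 * ev X1 i)"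
| "K1_table a1 a2 Pp Pm = (\<lambda>i. a2 * ev X1 i)"
| "K1_table a1 a2 Pm Pp = (\<lambda>i. - a2 * ev X1 i)"
| "K1_table a1 a2 X1 Pp = ev X2"
| "K1_table a1 a2 X1 Pm = (\<lambda>i. - ev X3 i)"
| "K1_table a1 a2 X2 L = (\<lambda>i. - ev X2 i)"
| "K1_table a1 a2 X3 L = ev X3"
| "K1_table a1 a2 _ _ = (\<lambda>i. 0)"

definition K1 :: "complex \<Rightarrow> complex \<Rightarrow> vec \<Rightarrow> vec \<Rightarrow> vec" where
  "K1 a1 a2 u v = (\<lambda>k. \<Sum>i\<in>UNIV. \<Sum>j\<in>UNIV. u i * v j * K1_table a1 a2 i j k)"

definition lin_map :: "(basis \<Rightarrow> basis \<Rightarrow> complex) \<Rightarrow> vec \<Rightarrow> vec" where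
  "lin_map M u = (\<lambda>i. \<Sum>j\<in>UNIV. M i j * u j)"

definition alg_iso :: "(vec \<Rightarrow> vec \<Rightarrow> vec) \<Rightarrow> (vec \<Rightarrow> vec \<Rightarrow> vec) \<Rightarrow> bool" where
  "alg_iso B1 B2 \<longleftrightarrow> (\<exists>M. bij (lin_map M) \<and>
      (\<forall>u v. lin_map M (B1 u v) = B2 (lin_map M u) (lin_map M v)))"

end

theory Submission
  imports Defs
begin

text \<open>Rescaling p_+ by s and X_1, X_2, X_3 by c, c s, c turns K_1(a_1,a_2) into
  K_1(c a_1, c a_2 / s); choosing c and s normalises each nonzero parameter to 1.
  The four normal forms are distinguished by two bracket identities, preserved under
  isomorphism: [[x,x],[y,z]] = 0 holds iff a_1 = 0, and [[[x,y],[z,w]],[p,q]] = 0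
  holds iff a_2 = 0.\<close>

lemma sum_UNIV_basis: "(\<Sum>i\<in>UNIV. f i) = f L + f Pp + f Pm + f X1 + f X2 + f X3"
  by (simp add: UNIV_basis add.assoc)

lemma K1_apply [simp]:
  "K1 a1 a2 u v L = 0"
  "K1 a1 a2 u v Pp = u L * v Pp - u Pp * v L"
  "K1 a1 a2 u v Pm = u Pm * v L - u L * v Pm"
  "K1 a1 a2 u v X1 = a1 * u L * v L + a2 * (u Pp * v Pm - u Pm * v Pp)"
  "K1 a1 a2 u v X2 = u X1 * v Pp - u X2 * v L"
  "K1 a1 a2 u v X3 = u X3 * v L - u X1 * v Pm"
  by (simp_all add: K1_def sum_UNIV_basis ev_def algebra_simps)

lemma alg_iso_diagonal:
  assumes nonzero: "\<And>i. d i \<noteq> 0"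
    and hom: "\<And>u v. (\<lambda>k. d k * B1 u v k) = B2 (\<lambda>i. d i * u i) (\<lambda>i. d i * v i)"
  shows "alg_iso B1 B2"
proof -
  define M where "M = (\<lambda>i j. if i = j then d i else 0)"
  have lin_map_M: "lin_map M = (\<lambda>u i. d i * u i)"
  proof (intro ext)
    fix u i
    show "lin_map M u i = d i * u i"
      by (cases i) (simp_all add: lin_map_def M_def sum_UNIV_basis)
  qed
  have "bij (\<lambda>u i. d i * u i)"
  proof (rule bijI)
    show "inj (\<lambda>u i. d i * u i)"
      by (rule injI) (simp add: fun_eq_iff nonzero)
    show "surj (\<lambda>u i. d i * u i)"
    proof (rule surjI)
      fix u :: vec
      show "(\<lambda>i. d i * (u i / d i)) = u" by (simp add: nonzero)
    qed
  qed
  then show ?thesis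
    unfolding alg_iso_def by (intro exI[of _ M]) (simp add: lin_map_M hom)
qed

lemma K1_rescale:
  assumes "c \<noteq> 0" "s \<noteq> 0"
  shows "alg_iso (K1 a1 a2) (K1 (c * a1) (c * a2 / s))"
proof (rule alg_iso_diagonal)
  define d where "d = (\<lambda>i. case i of L \<Rightarrow> 1 | Pp \<Rightarrow> s | Pm \<Rightarrow> 1 | X1 \<Rightarrow> c | X2 \<Rightarrow> c * s | X3 \<Rightarrow> c)"
  show "\<And>i. d i \<noteq> 0" using assms by (simp add: d_def split: basis.split)
  show "(\<lambda>k. d k * K1 a1 a2 u v k)
      = K1 (c * a1) (c * a2 / s) (\<lambda>i. d i * u i) (\<lambda>i. d i * v i)" for u v
  proof
    fix k
    show "d k * K1 a1 a2 u v k = K1 (c * a1) (c * a2 / s) (\<lambda>i. d i * u i) (\<lambda>i. d i * v i) k"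
      using assms by (cases k) (simp_all add: d_def field_simps)
  qed
qed

lemma K1_normal_form:
  "alg_iso (K1 a1 a2) (K1 (if a1 = 0 then 0 else 1) (if a2 = 0 then 0 else 1))"
proof -
  define c where "c = (if a1 = 0 then 1 else 1 / a1)"
  define s where "s = (if a2 = 0 then 1 else c * a2)"
  have "c \<noteq> 0" "s \<noteq> 0" by (simp_all add: c_def s_def)
  moreover have "c * a1 = (if a1 = 0 then 0 else 1)" "c * a2 / s = (if a2 = 0 then 0 else 1)"
    using \<open>c \<noteq> 0\<close> by (simp_all add: c_def s_def)
  ultimately show ?thesis using K1_rescale by metis
qed

definition bracket_embedding :: "(vec \<Rightarrow> vec) \<Rightarrow> (vec \<Rightarrow> vec \<Rightarrow> vec) \<Rightarrow> (vec \<Rightarrow> vec \<Rightarrow> vec) \<Rightarrow> bool"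
  where "bracket_embedding f B1 B2 \<longleftrightarrow>
    inj f \<and> f (\<lambda>_. 0) = (\<lambda>_. 0) \<and> (\<forall>u v. f (B1 u v) = B2 (f u) (f v))"

lemma alg_iso_bracket_embeddings:
  assumes "alg_iso B1 B2"
  shows "\<exists>f. bracket_embedding f B1 B2" "\<exists>g. bracket_embedding g B2 B1"
proof -
  obtain M where bij: "bij (lin_map M)"
    and hom: "\<And>u v. lin_map M (B1 u v) = B2 (lin_map M u) (lin_map M v)"
    using assms unfolding alg_iso_def by blast
  have zero: "lin_map M (\<lambda>_. 0) = (\<lambda>_. 0)" by (simp add: lin_map_def)
  then show "\<exists>f. bracket_embedding f B1 B2"
    using bij hom bij_is_inj unfolding bracket_embedding_def by blast
  let ?g = "inv (lin_map M)"
  have "?g (B2 x y) = B1 (?g x) (?g y)" for x y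
    using bij hom by (metis bij_inv_eq_iff)
  moreover have "?g (\<lambda>_. 0) = (\<lambda>_. 0)" using bij zero by (metis bij_inv_eq_iff)
  ultimately show "\<exists>g. bracket_embedding g B2 B1"
    using bij bij_imp_bij_inv bij_is_inj unfolding bracket_embedding_def by blast
qed

text \<open>Squares span the Leibniz kernel; this says it annihilates the derived algebra
  from the left.\<close>
definition squares_annihilate_derived :: "(vec \<Rightarrow> vec \<Rightarrow> vec) \<Rightarrow> bool" where
  "squares_annihilate_derived B \<longleftrightarrow> (\<forall>x y z. B (B x x) (B y z) = (\<lambda>_. 0))"

definition derived_two_step_nilpotent :: "(vec \<Rightarrow> vec \<Rightarrow> vec) \<Rightarrow> bool" where
  "derived_two_step_nilpotent B \<longleftrightarrow>
    (\<forall>x y z w p q. B (B (B x y) (B z w)) (B p q) = (\<lambda>_. 0))"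

lemma squares_annihilate_derived_embedding:
  assumes f: "bracket_embedding f B1 B2" and "squares_annihilate_derived B2"
  shows "squares_annihilate_derived B1"
  unfolding squares_annihilate_derived_def
proof (intro allI)
  fix x y z
  have "f (B1 (B1 x x) (B1 y z)) = B2 (B2 (f x) (f x)) (B2 (f y) (f z))"
    using f by (simp add: bracket_embedding_def)
  also have "\<dots> = f (\<lambda>_. 0)"
    using assms unfolding bracket_embedding_def squares_annihilate_derived_def by simp
  finally show "B1 (B1 x x) (B1 y z) = (\<lambda>_. 0)"
    using f unfolding bracket_embedding_def by (metis injD)
qed

lemma derived_two_step_nilpotent_embedding:
  assumes f: "bracket_embedding f B1 B2" and "derived_two_step_nilpotent B2"
  shows "derived_two_step_nilpotent B1"
  unfolding derived_two_step_nilpotent_def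
proof (intro allI)
  fix x y z w p q
  have "f (B1 (B1 (B1 x y) (B1 z w)) (B1 p q))
      = B2 (B2 (B2 (f x) (f y)) (B2 (f z) (f w))) (B2 (f p) (f q))"
    using f by (simp add: bracket_embedding_def)
  also have "\<dots> = f (\<lambda>_. 0)"
    using assms unfolding bracket_embedding_def derived_two_step_nilpotent_def by simp
  finally show "B1 (B1 (B1 x y) (B1 z w)) (B1 p q) = (\<lambda>_. 0)"
    using f unfolding bracket_embedding_def by (metis injD)
qed

lemma squares_annihilate_derived_K1_iff:
  "squares_annihilate_derived (K1 a1 a2) \<longleftrightarrow> a1 = 0"
proof
  assume "squares_annihilate_derived (K1 a1 a2)"
  then have "K1 a1 a2 (K1 a1 a2 (ev L) (ev L)) (K1 a1 a2 (ev L) (ev Pp)) X2 = 0"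
    unfolding squares_annihilate_derived_def by simp
  then show "a1 = 0" by (simp add: ev_def)
next
  assume "a1 = 0"
  show "squares_annihilate_derived (K1 a1 a2)"
    unfolding squares_annihilate_derived_def
  proof (intro allI ext)
    fix x y z k
    show "K1 a1 a2 (K1 a1 a2 x x) (K1 a1 a2 y z) k = 0"
      using \<open>a1 = 0\<close> by (cases k) simp_all
  qed
qed

lemma derived_two_step_nilpotent_K1_iff:
  "derived_two_step_nilpotent (K1 a1 a2) \<longleftrightarrow> a2 = 0"
proof
  assume "derived_two_step_nilpotent (K1 a1 a2)"
  then have "K1 a1 a2 (K1 a1 a2 (K1 a1 a2 (ev L) (ev Pp)) (K1 a1 a2 (ev L) (ev Pm)))
      (K1 a1 a2 (ev L) (ev Pp)) X2 = 0"
    unfolding derived_two_step_nilpotent_def by simp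
  then show "a2 = 0" by (simp add: ev_def)
next
  assume "a2 = 0"
  show "derived_two_step_nilpotent (K1 a1 a2)"
    unfolding derived_two_step_nilpotent_def
  proof (intro allI ext)
    fix x y z w p q k
    show "K1 a1 a2 (K1 a1 a2 (K1 a1 a2 x y) (K1 a1 a2 z w)) (K1 a1 a2 p q) k = 0"
      using \<open>a2 = 0\<close> by (cases k) simp_all
  qed
qed

lemma K1_alg_iso_parameters_vanish_simultaneously:
  assumes "alg_iso (K1 a1 a2) (K1 b1 b2)"
  shows "a1 = 0 \<longleftrightarrow> b1 = 0" "a2 = 0 \<longleftrightarrow> b2 = 0"
  using alg_iso_bracket_embeddings[OF assms]
    squares_annihilate_derived_embedding derived_two_step_nilpotent_embedding
  by (metis squares_annihilate_derived_K1_iff derived_two_step_nilpotent_K1_iff)+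

theorem mainTheorem3:
  shows "(\<forall>a1 a2. alg_iso (K1 a1 a2) (K1 1 1) \<or> alg_iso (K1 a1 a2) (K1 1 0) \<or>
                   alg_iso (K1 a1 a2) (K1 0 1) \<or> alg_iso (K1 a1 a2) (K1 0 0))
       \<and> (\<forall>p\<in>{(1,1),(1,0),(0,1),(0,0)}. \<forall>q\<in>{(1,1),(1,0),(0,1),(0,0)}.
            p \<noteq> q \<longrightarrow> \<not> alg_iso (K1 (fst p) (snd p)) (K1 (fst q) (snd q)))"
proof
  show "\<forall>a1 a2. alg_iso (K1 a1 a2) (K1 1 1) \<or> alg_iso (K1 a1 a2) (K1 1 0) \<or>
                   alg_iso (K1 a1 a2) (K1 0 1) \<or> alg_iso (K1 a1 a2) (K1 0 0)"
    using K1_normal_form by (metis (full_types))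
  show "\<forall>p\<in>{(1,1),(1,0),(0,1),(0,0)}. \<forall>q\<in>{(1,1),(1,0),(0,1),(0,0)}.
            p \<noteq> q \<longrightarrow> \<not> alg_iso (K1 (fst p) (snd p)) (K1 (fst q) (snd q))"
    using K1_alg_iso_parameters_vanish_simultaneously by fastforce
qed

end
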